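(* Let $G=(V,E)$ be a simple, connected graph with maximum degree $\Delta$, and let $V = A \cup B \cup C$ be a partition into pairwise disjoint sets ($C$ possibly empty) satisfying: (1) every $v \in A$ satisfies $d_B(v) \geq d_A(v) + \max\{1, d_C(v)\}$; (2) every $v \in B$ satisfies $d_A(v) \geq d_B(v) + \max\{1, d_C(v)\}$; (3) $d_C(v) = 0$ for all $v \in C$; (4) every $v \in C$ satisfies $d_A(v) = d_B(v)$; (5) $\# E(A \cup B, C) + 2\# E(A,A) + 2\# E(B,B) \leq 2\# E(A,B)$. Then the number of edges between $A \cup C$ and $B$ satisfies $$\# E(A \cup C, B) \geq \left(\frac{1}{2} + \frac{1}{3\Delta}\right)|E|.$$
   Context: For a vertex $v$ and a set $S \subseteq V$, $d_S(v)$ denotes the number of neighbors of $v$ in $S$. For disjoint $X,Y \subseteq V$, $\# E(X,Y)$ is the number of edges with one endpoint in $X$ and the other in $Y$; $\# E(X,X)$ is the number of edges with both endpoints in $X$. *)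

theory Defs
  imports Complex_Main
begin

definition simple_graph :: "'a set \<Rightarrow> 'a set set \<Rightarrow> bool" where
  "simple_graph V E \<longleftrightarrow> finite V \<and> (\<forall>e\<in>E. e \<subseteq> V \<and> card e = 2)"

definition adj :: "'a set set \<Rightarrow> 'a \<Rightarrow> 'a \<Rightarrow> bool" where
  "adj E u v \<longleftrightarrow> {u, v} \<in> E"

definition connected_graph :: "'a set \<Rightarrow> 'a set set \<Rightarrow> bool" where
  "connected_graph V E \<longleftrightarrow> V \<noteq> {} \<and>
     (\<forall>u\<in>V. \<forall>v\<in>V. (u, v) \<in> (rtrancl {(x, y). adj E x y}))"

definition deg_in :: "'a set set \<Rightarrow> 'a set \<Rightarrow> 'a \<Rightarrow> nat" where
  "deg_in E S v = card {u \<in> S. adj E v u}"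

definition degree :: "'a set \<Rightarrow> 'a set set \<Rightarrow> 'a \<Rightarrow> nat" where
  "degree V E v = deg_in E V v"

definition max_degree :: "'a set \<Rightarrow> 'a set set \<Rightarrow> nat" where
  "max_degree V E = Max (degree V E ` V)"

text \<open>Edges with one endpoint in X and the other in Y (for disjoint X, Y),
  or both endpoints in X (when Y = X).\<close>
definition edges_between :: "'a set set \<Rightarrow> 'a set \<Rightarrow> 'a set \<Rightarrow> nat" where
  "edges_between E X Y = card {e \<in> E. \<exists>x\<in>X. \<exists>y\<in>Y. e = {x, y}}"

end

theory Submission
  imports Defs
begin

text \<open>Let \<open>a\<close>, \<open>b\<close> be the numbers of edges inside \<open>A\<close> and \<open>B\<close>, \<open>x = #E(A,B)\<close> and
  \<open>c = #E(A,C)\<close>. Summing (4) over \<open>C\<close> gives \<open>#E(B,C) = c\<close> and (3) says that \<open>C\<close> is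
  independent, so \<open>|E| = a + b + x + 2c\<close> while \<open>#E(A \<union> C, B) = x + c = |E|/2 + y/2\<close> with
  \<open>y = x - a - b\<close>. Summing (1) over \<open>A\<close> and (2) over \<open>B\<close> gives \<open>|A| + |B| \<le> 2y\<close> and
  \<open>c \<le> y\<close>. Summing degrees over \<open>A\<close> and over \<open>B\<close> then yields \<open>a + b + x + c \<le> \<Delta> y\<close>,
  and \<open>2c \<le> \<Delta> y\<close> because a vertex of \<open>C\<close> with a neighbour in \<open>A\<close> also has one in \<open>B\<close>,
  so that \<open>\<Delta> \<ge> 2\<close> unless \<open>c = 0\<close>. Hence \<open>2|E| \<le> 3 \<Delta> y\<close>.\<close>

lemma edges_between_commute: "edges_between E X Y = edges_between E Y X"
  unfolding edges_between_def by (metis insert_commute)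

lemma deg_in_eq_card_incident_edges:
  "deg_in E Y x = card {e \<in> E. \<exists>y\<in>Y. e = {x, y}}"
proof -
  have "{e \<in> E. \<exists>y\<in>Y. e = {x, y}} = (\<lambda>y. {x, y}) ` {y \<in> Y. adj E x y}"
    by (auto simp: adj_def)
  moreover have "inj_on (\<lambda>y. {x, y}) {y \<in> Y. adj E x y}"
    by (auto intro: inj_onI simp: doubleton_eq_iff)
  ultimately show ?thesis
    unfolding deg_in_def by (simp add: card_image)
qed

lemma edges_between_eq_sum_deg_in:
  assumes "finite X" "finite Y" "X \<inter> Y = {}"
  shows "edges_between E X Y = (\<Sum>x\<in>X. deg_in E Y x)"
proof -
  let ?T = "{e \<in> E. \<exists>x\<in>X. \<exists>y\<in>Y. e = {x, y}}"
  have "finite ?T"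
    by (rule finite_subset[of _ "(\<lambda>(x, y). {x, y}) ` (X \<times> Y)"]) (use assms in auto)
  moreover have "\<forall>e\<in>?T. card {x \<in> X. x \<in> e} = 1"
    using assms(3) by (auto simp: card_1_singleton_iff)
  ultimately have "(\<Sum>x\<in>X. card {e \<in> ?T. x \<in> e}) = 1 * card ?T"
    by (rule sum_multicount[OF assms(1)])
  moreover have "{e \<in> ?T. x \<in> e} = {e \<in> E. \<exists>y\<in>Y. e = {x, y}}" if "x \<in> X" for x
    using that assms(3) by auto
  ultimately show ?thesis
    unfolding edges_between_def deg_in_eq_card_incident_edges by simp
qed

lemma double_edges_between_self_eq_sum_deg_in:
  assumes "finite X" "\<forall>e\<in>E. card e = 2"
  shows "2 * edges_between E X X = (\<Sum>x\<in>X. deg_in E X x)"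
proof -
  let ?T = "{e \<in> E. \<exists>x\<in>X. \<exists>y\<in>X. e = {x, y}}"
  have "finite ?T"
    by (rule finite_subset[of _ "(\<lambda>(x, y). {x, y}) ` (X \<times> X)"]) (use assms in auto)
  moreover have "\<forall>e\<in>?T. card {x \<in> X. x \<in> e} = 2"
  proof
    fix e assume "e \<in> ?T"
    then have "{x \<in> X. x \<in> e} = e" "card e = 2" using assms(2) by auto
    then show "card {x \<in> X. x \<in> e} = 2" by simp
  qed
  ultimately have "(\<Sum>x\<in>X. card {e \<in> ?T. x \<in> e}) = 2 * card ?T"
    by (rule sum_multicount[OF assms(1)])
  moreover have "{e \<in> ?T. x \<in> e} = {e \<in> E. \<exists>y\<in>X. e = {x, y}}" if "x \<in> X" for x
    using that by (auto simp: insert_commute)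
  ultimately show ?thesis
    unfolding edges_between_def deg_in_eq_card_incident_edges by simp
qed

lemma deg_in_Un:
  assumes "finite X" "finite Y" "X \<inter> Y = {}"
  shows "deg_in E (X \<union> Y) v = deg_in E X v + deg_in E Y v"
proof -
  have "{u \<in> X \<union> Y. adj E v u} = {u \<in> X. adj E v u} \<union> {u \<in> Y. adj E v u}"
    by auto
  then show ?thesis
    unfolding deg_in_def using assms by (simp add: card_Un_disjoint disjoint_iff)
qed

lemma card_edges_eq_edges_between:
  assumes "simple_graph V E"
  shows "card E = edges_between E V V"
proof -
  have "{e \<in> E. \<exists>x\<in>V. \<exists>y\<in>V. e = {x, y}} = E"
    using assms by (fastforce simp: simple_graph_def card_2_iff)
  then show ?thesis
    unfolding edges_between_def by simp
qed

lemma sum_degree_eq_double_card_edges: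
  assumes "simple_graph V E"
  shows "(\<Sum>v\<in>V. degree V E v) = 2 * card E"
proof -
  have "finite V" "\<forall>e\<in>E. card e = 2"
    using assms by (auto simp: simple_graph_def)
  then have "2 * edges_between E V V = (\<Sum>v\<in>V. deg_in E V v)"
    by (rule double_edges_between_self_eq_sum_deg_in)
  then show ?thesis
    by (simp add: degree_def card_edges_eq_edges_between[OF assms])
qed

lemma degree_partition:
  assumes "finite V" "V = X \<union> Y \<union> Z" "X \<inter> Y = {}" "X \<inter> Z = {}" "Y \<inter> Z = {}"
  shows "degree V E v = deg_in E X v + deg_in E Y v + deg_in E Z v"
  using assms by (simp add: degree_def deg_in_Un Int_Un_distrib2)

lemma sum_degree_partition:
  assumes "simple_graph V E" "V = X \<union> Y \<union> Z" "X \<inter> Y = {}" "X \<inter> Z = {}" "Y \<inter> Z = {}"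
  shows "(\<Sum>v\<in>X. degree V E v)
           = 2 * edges_between E X X + edges_between E X Y + edges_between E X Z"
proof -
  have fin: "finite V" "finite X" "finite Y" "finite Z" "\<forall>e\<in>E. card e = 2"
    using assms(1,2) by (auto simp: simple_graph_def)
  then show ?thesis
    using assms(2-) degree_partition[OF fin(1) assms(2-)]
    by (simp add: sum.distrib double_edges_between_self_eq_sum_deg_in edges_between_eq_sum_deg_in)
qed

lemma card_edges_partition:
  assumes "simple_graph V E" "V = X \<union> Y \<union> Z" "X \<inter> Y = {}" "X \<inter> Z = {}" "Y \<inter> Z = {}"
  shows "card E = edges_between E X X + edges_between E Y Y + edges_between E Z Z
           + edges_between E X Y + edges_between E X Z + edges_between E Y Z"
proof -
  have "finite X" "finite Y" "finite Z"
    using assms(1,2) by (auto simp: simple_graph_def)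
  then have "2 * card E
      = (\<Sum>v\<in>X. degree V E v) + (\<Sum>v\<in>Y. degree V E v) + (\<Sum>v\<in>Z. degree V E v)"
    using assms
    by (simp add: sum_degree_eq_double_card_edges[symmetric] sum.union_disjoint Int_Un_distrib2)
  also have "\<dots> = 2 * (edges_between E X X + edges_between E Y Y + edges_between E Z Z
           + edges_between E X Y + edges_between E X Z + edges_between E Y Z)"
    using sum_degree_partition[OF assms]
      sum_degree_partition[of V E Y X Z] sum_degree_partition[of V E Z X Y] assms
    by (simp add: Un_ac Int_ac edges_between_commute)
  finally show ?thesis by simp
qed

lemma degree_le_max_degree:
  assumes "finite V" "v \<in> V"
  shows "degree V E v \<le> max_degree V E"
  using assms by (simp add: max_degree_def)

lemma sum_degree_le_max_degree:
  assumes "finite V" "X \<subseteq> V"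
  shows "(\<Sum>v\<in>X. degree V E v) \<le> max_degree V E * card X"
  using sum_bounded_above[of X "degree V E" "max_degree V E"]
    degree_le_max_degree[OF assms(1)] assms(2)
  by (auto simp: mult.commute)

lemma edges_at_part_le_max_degree:
  assumes "simple_graph V E" "V = X \<union> Y \<union> Z" "X \<inter> Y = {}" "X \<inter> Z = {}" "Y \<inter> Z = {}"
  shows "2 * edges_between E X X + edges_between E X Y + edges_between E X Z
           \<le> max_degree V E * card X"
proof -
  have "finite V" "X \<subseteq> V"
    using assms(1,2) by (auto simp: simple_graph_def)
  from sum_degree_le_max_degree[OF this, of E] show ?thesis
    unfolding sum_degree_partition[OF assms] .
qed

lemma edges_between_Un_left:
  assumes "finite X" "finite Y" "finite Z" "X \<inter> Y = {}" "X \<inter> Z = {}" "Y \<inter> Z = {}"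
  shows "edges_between E (X \<union> Y) Z = edges_between E X Z + edges_between E Y Z"
  using assms by (simp add: edges_between_eq_sum_deg_in sum.union_disjoint Int_Un_distrib2)

lemma edges_between_ge_of_deg_in_ge:
  assumes "finite X" "finite Y" "finite Z" "X \<inter> Y = {}" "X \<inter> Z = {}" "\<forall>e\<in>E. card e = 2"
    and deg: "\<forall>v\<in>X. deg_in E Y v \<ge> deg_in E X v + max 1 (deg_in E Z v)"
  shows "2 * edges_between E X X + card X \<le> edges_between E X Y"
    and "2 * edges_between E X X + edges_between E X Z \<le> edges_between E X Y"
proof -
  have "(\<Sum>v\<in>X. deg_in E X v + 1) \<le> (\<Sum>v\<in>X. deg_in E Y v)"
    and "(\<Sum>v\<in>X. deg_in E X v + deg_in E Z v) \<le> (\<Sum>v\<in>X. deg_in E Y v)"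
    using deg by (auto intro!: sum_mono)
  then show "2 * edges_between E X X + card X \<le> edges_between E X Y"
    and "2 * edges_between E X X + edges_between E X Z \<le> edges_between E X Y"
    using assms(1-6)
    by (simp_all add: sum.distrib sum_Suc
        double_edges_between_self_eq_sum_deg_in edges_between_eq_sum_deg_in)
qed

lemma edge_count_inequality:
  fixes a b x c nA nB D :: nat
  assumes "2 * a + nA \<le> x" "2 * a + c \<le> x" "2 * b + nB \<le> x" "2 * b + c \<le> x"
    and "2 * a + x + c \<le> D * nA" "2 * b + x + c \<le> D * nB"
    and "c = 0 \<or> 2 \<le> D"
  shows "(1/2 + 1 / (3 * real D)) * real (a + b + x + 2 * c) \<le> real (x + c)"
proof -
  define m where "m = a + b + x + 2 * c"
  define y where "y = x - a - b"
  have y: "nA + nB \<le> 2 * y" "c \<le> y" "x = y + a + b"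
    using assms(1-4) by (auto simp: y_def)
  have "2 * (a + b + x + c) \<le> D * (nA + nB)"
    using assms(5,6) by (simp add: algebra_simps)
  also have "\<dots> \<le> D * (2 * y)"
    using y(1) by (rule mult_left_mono) simp
  finally have deg: "2 * (a + b + x + c) \<le> 2 * (D * y)"
    by simp
  have "2 * c \<le> D * y"
    using assms(7)
  proof
    assume "2 \<le> D"
    then show "2 * c \<le> D * y"
      using y(2) by (intro mult_mono) auto
  qed simp
  with deg have "2 * m \<le> 3 * (D * y)"
    by (simp add: m_def)
  then have key: "2 * real m \<le> 3 * real D * real y"
    by (metis of_nat_le_iff of_nat_mult of_nat_numeral mult.assoc)
  have target: "real (x + c) = real m / 2 + real y / 2"
    using y(3) by (simp add: m_def field_simps)
  show ?thesis
  proof (cases "D = 0")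
    case False
    then have "real m / (3 * real D) \<le> real y / 2"
      using key by (simp add: divide_simps mult.commute)
    then show ?thesis
      unfolding target m_def[symmetric] by (simp add: algebra_simps)
  qed (use y(3) in \<open>simp add: target m_def\<close>)
qed

lemma max_degree_ge_2_of_balanced:
  assumes "simple_graph V E" "V = X \<union> Y \<union> Z" "X \<inter> Y = {}" "X \<inter> Z = {}" "Y \<inter> Z = {}"
    and balanced: "\<forall>v\<in>Z. deg_in E X v = deg_in E Y v"
    and "edges_between E X Z \<noteq> 0"
  shows "2 \<le> max_degree V E"
proof -
  have fin: "finite V" "finite X" "finite Z"
    using assms(1,2) by (auto simp: simple_graph_def)
  then have "(\<Sum>v\<in>Z. deg_in E X v) \<noteq> 0"
    using assms(4,7)
    by (simp add: edges_between_commute[of E X Z] edges_between_eq_sum_deg_in Int_commute)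
  then obtain v where v: "v \<in> Z" "deg_in E X v \<noteq> 0"
    by (meson sum.neutral)
  then have "2 \<le> degree V E v"
    using balanced degree_partition[OF fin(1) assms(2-5), of E v] by simp
  also have "\<dots> \<le> max_degree V E"
    using v(1) assms(2) by (intro degree_le_max_degree[OF fin(1)]) simp
  finally show ?thesis .
qed

theorem corollary3:
  fixes V :: "'a set" and E :: "'a set set" and A B C :: "'a set"
  assumes graph: "simple_graph V E"
    and conn: "connected_graph V E"
    and part: "V = A \<union> B \<union> C" "A \<inter> B = {}" "A \<inter> C = {}" "B \<inter> C = {}"
    and h1: "\<forall>v\<in>A. deg_in E B v \<ge> deg_in E A v + max 1 (deg_in E C v)"
    and h2: "\<forall>v\<in>B. deg_in E A v \<ge> deg_in E B v + max 1 (deg_in E C v)"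
    and h3: "\<forall>v\<in>C. deg_in E C v = 0"
    and h4: "\<forall>v\<in>C. deg_in E A v = deg_in E B v"
    and h5: "edges_between E (A \<union> B) C + 2 * edges_between E A A + 2 * edges_between E B B
               \<le> 2 * edges_between E A B"
  shows "real (edges_between E (A \<union> C) B)
           \<ge> (1/2 + 1 / (3 * real (max_degree V E))) * real (card E)"
proof -
  let ?a = "edges_between E A A" and ?b = "edges_between E B B"
    and ?x = "edges_between E A B" and ?c = "edges_between E A C" and ?\<Delta> = "max_degree V E"
  have fin: "finite V" "\<forall>e\<in>E. card e = 2" "finite A" "finite B" "finite C"
    using graph part(1) by (auto simp: simple_graph_def)
  have part': "V = B \<union> A \<union> C" "B \<inter> A = {}"
    using part by auto
  have BA: "edges_between E B A = ?x"
    by (rule edges_between_commute)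
  have BC: "edges_between E B C = ?c"
    using h4 fin(3-5) part(3,4)
    by (simp add: edges_between_commute[of E _ C] edges_between_eq_sum_deg_in Int_commute)
  have "edges_between E C C = 0"
    using double_edges_between_self_eq_sum_deg_in[OF fin(5,2)] h3 by simp
  then have card: "card E = ?a + ?b + ?x + 2 * ?c"
    using card_edges_partition[OF graph part] BC by simp
  have cut: "edges_between E (A \<union> C) B = ?x + ?c"
    using edges_between_Un_left[OF fin(3,5,4) part(3,2)] part(4) BC
    by (simp add: edges_between_commute[of E C B] Int_commute)
  have "(1/2 + 1 / (3 * real ?\<Delta>)) * real (?a + ?b + ?x + 2 * ?c) \<le> real (?x + ?c)"
  proof (rule edge_count_inequality)
    show "2 * ?a + card A \<le> ?x" and "2 * ?a + ?c \<le> ?x"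
      by (rule edges_between_ge_of_deg_in_ge[OF fin(3,4,5) part(2,3) fin(2) h1])+
    show "2 * ?b + card B \<le> ?x" and "2 * ?b + ?c \<le> ?x"
      using edges_between_ge_of_deg_in_ge[OF fin(4,3,5) part'(2) part(4) fin(2) h2] BA BC
      by simp_all
    show "2 * ?a + ?x + ?c \<le> ?\<Delta> * card A"
      by (rule edges_at_part_le_max_degree[OF graph part])
    show "2 * ?b + ?x + ?c \<le> ?\<Delta> * card B"
      using edges_at_part_le_max_degree[OF graph part' part(4,3)] BA BC by simp
    show "?c = 0 \<or> 2 \<le> ?\<Delta>"
      using max_degree_ge_2_of_balanced[OF graph part h4] by blast
  qed
  then show ?thesis
    unfolding card cut by simp
qed

end
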